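(* Let $R$ be a $*$-ring. Equip the power series ring $R[[x]]$ with the involution $\big(\sum_{i\ge 0}a_ix^i\big)^*=\sum_{i\ge0}a_i^*x^i$, and $R[[x]]/(x^n)$ with the induced involution. Then the following are equivalent: (1) $R$ is strongly $J$-$*$-clean. (2) $R[[x]]$ is strongly $J$-$*$-clean. (3) $R[[x]]/(x^n)$ is strongly $J$-$*$-clean for all $n\ge 2$. (4) $R[[x]]/(x^2)$ is strongly $J$-$*$-clean.
   Context: All rings are associative with identity. A $*$-ring is a ring $R$ with an involution $*$, i.e. a map $a\mapsto a^*$ with $(a+b)^*=a^*+b^*$, $(ab)^*=b^*a^*$, $(a^* )^*=a$. $J(R)$ denotes the Jacobson radical of $R$. A projection is an element $e$ with $e^2=e=e^*$. A $*$-ring $R$ is strongly $J$-$*$-clean if every $a\in R$ can be written $a=e+u$ with $e$ a projection, $u\in J(R)$ and $ae=ea$. *)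

theory Defs
  imports "HOL-Algebra.Algebra"
begin

definition star_ring :: "('a, 'm) ring_scheme \<Rightarrow> ('a \<Rightarrow> 'a) \<Rightarrow> bool" where
  "star_ring R s \<longleftrightarrow> ring R \<and> (\<forall>a\<in>carrier R. s a \<in> carrier R) \<and>
     (\<forall>a\<in>carrier R. \<forall>b\<in>carrier R. s (a \<oplus>\<^bsub>R\<^esub> b) = s a \<oplus>\<^bsub>R\<^esub> s b) \<and>
     (\<forall>a\<in>carrier R. \<forall>b\<in>carrier R. s (a \<otimes>\<^bsub>R\<^esub> b) = s b \<otimes>\<^bsub>R\<^esub> s a) \<and>
     (\<forall>a\<in>carrier R. s (s a) = a)"

definition left_ideal :: "'a set \<Rightarrow> ('a, 'm) ring_scheme \<Rightarrow> bool" where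
  "left_ideal I R \<longleftrightarrow> additive_subgroup I R \<and>
     (\<forall>r\<in>carrier R. \<forall>a\<in>I. r \<otimes>\<^bsub>R\<^esub> a \<in> I)"

definition maximal_left_ideal :: "'a set \<Rightarrow> ('a, 'm) ring_scheme \<Rightarrow> bool" where
  "maximal_left_ideal I R \<longleftrightarrow> left_ideal I R \<and> I \<noteq> carrier R \<and>
     (\<forall>K. left_ideal K R \<and> I \<subseteq> K \<and> K \<noteq> carrier R \<longrightarrow> K = I)"

definition jacobson :: "('a, 'm) ring_scheme \<Rightarrow> 'a set" where
  "jacobson R = carrier R \<inter> \<Inter> {I. maximal_left_ideal I R}"

definition projection :: "('a, 'm) ring_scheme \<Rightarrow> ('a \<Rightarrow> 'a) \<Rightarrow> 'a \<Rightarrow> bool" where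
  "projection R s e \<longleftrightarrow> e \<in> carrier R \<and> e \<otimes>\<^bsub>R\<^esub> e = e \<and> s e = e"

definition strongly_J_star_clean :: "('a, 'm) ring_scheme \<Rightarrow> ('a \<Rightarrow> 'a) \<Rightarrow> bool" where
  "strongly_J_star_clean R s \<longleftrightarrow>
     (\<forall>a\<in>carrier R. \<exists>e u. projection R s e \<and> u \<in> jacobson R \<and>
        a = e \<oplus>\<^bsub>R\<^esub> u \<and> a \<otimes>\<^bsub>R\<^esub> e = e \<otimes>\<^bsub>R\<^esub> a)"

definition PS_carrier :: "('a, 'm) ring_scheme \<Rightarrow> (nat \<Rightarrow> 'a) set" where
  "PS_carrier R = {f. \<forall>i. f i \<in> carrier R}"

definition PS :: "('a, 'm) ring_scheme \<Rightarrow> (nat \<Rightarrow> 'a) ring" where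
  "PS R = \<lparr>carrier = PS_carrier R,
           monoid.mult = (\<lambda>f g n. \<Oplus>\<^bsub>R\<^esub> i\<in>{..n}. f i \<otimes>\<^bsub>R\<^esub> g (n - i)),
           monoid.one = (\<lambda>n. if n = 0 then \<one>\<^bsub>R\<^esub> else \<zero>\<^bsub>R\<^esub>),
           ring.zero = (\<lambda>n. \<zero>\<^bsub>R\<^esub>),
           ring.add = (\<lambda>f g n. f n \<oplus>\<^bsub>R\<^esub> g n)\<rparr>"

definition PS_X :: "('a, 'm) ring_scheme \<Rightarrow> nat \<Rightarrow> 'a" where
  "PS_X R = (\<lambda>n. if n = 1 then \<one>\<^bsub>R\<^esub> else \<zero>\<^bsub>R\<^esub>)"

definition PS_star :: "('a \<Rightarrow> 'a) \<Rightarrow> (nat \<Rightarrow> 'a) \<Rightarrow> (nat \<Rightarrow> 'a)" where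
  "PS_star s f = (\<lambda>n. s (f n))"

definition PS_ideal :: "('a, 'm) ring_scheme \<Rightarrow> nat \<Rightarrow> (nat \<Rightarrow> 'a) set" where
  "PS_ideal R n = genideal (PS R) {PS_X R [^]\<^bsub>(PS R)\<^esub> n}"

definition PS_trunc :: "('a, 'm) ring_scheme \<Rightarrow> nat \<Rightarrow> (nat \<Rightarrow> 'a) set ring" where
  "PS_trunc R n = PS R Quot PS_ideal R n"

text \<open>Induced involution on cosets: the class of f is sent to the class of f*
  (written as the image of the coset under the involution of R[[x]]).\<close>
definition PS_trunc_star :: "('a \<Rightarrow> 'a) \<Rightarrow> (nat \<Rightarrow> 'a) set \<Rightarrow> (nat \<Rightarrow> 'a) set" where
  "PS_trunc_star s C = image (PS_star s) C"

end

theory Submission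
  imports Defs
begin

text \<open>The strongly J-\<open>*\<close>-clean property passes along surjective \<open>*\<close>-homomorphisms, since
  the Jacobson radical, described as the set of \<open>j\<close> with \<open>\<one> \<ominus> r \<otimes> j\<close> left invertible for
  all \<open>r\<close>, maps into the radical. This gives (2) \<open>\<Rightarrow>\<close> (1) via \<open>f \<mapsto> f 0\<close>, (2) \<open>\<Rightarrow>\<close> (3) via
  the quotient maps, and (4) \<open>\<Rightarrow>\<close> (1) via the constant term on \<open>R[[x]]/(x\<^sup>2)\<close>.
  For (1) \<open>\<Rightarrow>\<close> (2), write \<open>f 0 = e \<oplus> u\<close>. In a strongly J-\<open>*\<close>-clean ring an idempotent
  and the projection of its decomposition are commuting idempotents differing by a radical
  element, hence equal; so every idempotent is self-adjoint, which forces projections to be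
  central. Thus the constant series \<open>e\<close> commutes with \<open>f\<close>, and \<open>f \<ominus> e\<close> lies in the radical of
  \<open>R[[x]]\<close> because its constant term \<open>u\<close> lies in that of \<open>R\<close>.\<close>

section \<open>Left ideals and the Jacobson radical\<close>

context ring
begin

lemma left_idealI:
  assumes "I \<subseteq> carrier R" "\<zero> \<in> I" "\<And>a. a \<in> I \<Longrightarrow> \<ominus> a \<in> I"
    "\<And>a b. a \<in> I \<Longrightarrow> b \<in> I \<Longrightarrow> a \<oplus> b \<in> I"
    "\<And>r a. r \<in> carrier R \<Longrightarrow> a \<in> I \<Longrightarrow> r \<otimes> a \<in> I"
  shows "left_ideal I R"
  unfolding left_ideal_def additive_subgroup_def
  using assms by (auto intro!: add.subgroupI simp: a_inv_def)

lemma left_idealD: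
  assumes "left_ideal I R"
  shows "I \<subseteq> carrier R" "\<zero> \<in> I" "\<And>a. a \<in> I \<Longrightarrow> \<ominus> a \<in> I"
    "\<And>a b. a \<in> I \<Longrightarrow> b \<in> I \<Longrightarrow> a \<oplus> b \<in> I"
    "\<And>r a. r \<in> carrier R \<Longrightarrow> a \<in> I \<Longrightarrow> r \<otimes> a \<in> I"
  using assms unfolding left_ideal_def
  by (auto simp: additive_subgroup.a_subset additive_subgroup.zero_closed
      additive_subgroup.a_inv_closed additive_subgroup.a_closed)

lemma left_ideal_one_imp_carrier:
  assumes "left_ideal I R" "\<one> \<in> I"
  shows "I = carrier R"
  using left_idealD[OF assms(1)] left_idealD(5)[OF assms(1) _ assms(2)] by force

lemma left_ideal_zero: "left_ideal {\<zero>} R"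
  by (rule left_idealI) auto

lemma left_ideal_add_principal:
  assumes I: "left_ideal I R" and x: "x \<in> carrier R"
  shows "left_ideal {i \<oplus> r \<otimes> x | i r. i \<in> I \<and> r \<in> carrier R} R"
proof -
  note ID = left_idealD[OF I]
  show ?thesis
  proof (rule left_idealI)
    show "\<zero> \<in> {i \<oplus> r \<otimes> x | i r. i \<in> I \<and> r \<in> carrier R}"
      using ID(2) x by (force intro: exI[of _ \<zero>])
  next
    fix a assume "a \<in> {i \<oplus> r \<otimes> x | i r. i \<in> I \<and> r \<in> carrier R}"
    then obtain i r where "a = i \<oplus> r \<otimes> x" "i \<in> I" "r \<in> carrier R" by blast
    moreover from this have "\<ominus> a = \<ominus> i \<oplus> (\<ominus> r) \<otimes> x"
      using ID(1) x by (auto simp: minus_add l_minus)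
    ultimately show "\<ominus> a \<in> {i \<oplus> r \<otimes> x | i r. i \<in> I \<and> r \<in> carrier R}"
      using ID(3) by blast
  next
    fix a b
    assume "a \<in> {i \<oplus> r \<otimes> x | i r. i \<in> I \<and> r \<in> carrier R}"
      and "b \<in> {i \<oplus> r \<otimes> x | i r. i \<in> I \<and> r \<in> carrier R}"
    then obtain i r j t where "a = i \<oplus> r \<otimes> x" "b = j \<oplus> t \<otimes> x"
      and "i \<in> I" "j \<in> I" "r \<in> carrier R" "t \<in> carrier R" by blast
    moreover from this have "a \<oplus> b = (i \<oplus> j) \<oplus> (r \<oplus> t) \<otimes> x"
      using ID(1) x by (simp add: l_distr a_ac subset_iff)
    ultimately show "a \<oplus> b \<in> {i \<oplus> r \<otimes> x | i r. i \<in> I \<and> r \<in> carrier R}"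
      using ID(4) by blast
  next
    fix s a
    assume s: "s \<in> carrier R" and "a \<in> {i \<oplus> r \<otimes> x | i r. i \<in> I \<and> r \<in> carrier R}"
    then obtain i r where "a = i \<oplus> r \<otimes> x" "i \<in> I" "r \<in> carrier R" by blast
    moreover from this have "s \<otimes> a = s \<otimes> i \<oplus> (s \<otimes> r) \<otimes> x"
      using ID(1) x s by (auto simp: r_distr m_assoc)
    ultimately show "s \<otimes> a \<in> {i \<oplus> r \<otimes> x | i r. i \<in> I \<and> r \<in> carrier R}"
      using ID(5) s by blast
  qed (use ID(1) x in auto)
qed

lemma exists_maximal_left_ideal:
  assumes I: "left_ideal I R" and one: "\<one> \<notin> I"
  shows "\<exists>M. maximal_left_ideal M R \<and> I \<subseteq> M"
proof -
  define A where "A = {K. left_ideal K R \<and> I \<subseteq> K \<and> \<one> \<notin> K}"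
  have "\<exists>M\<in>A. \<forall>K\<in>A. M \<subseteq> K \<longrightarrow> K = M"
  proof (rule subset_Zorn_nonempty)
    show "A \<noteq> {}" using I one by (auto simp: A_def)
  next
    fix C assume C: "C \<noteq> {}" "subset.chain A C"
    then have CA: "\<And>K. K \<in> C \<Longrightarrow> left_ideal K R \<and> I \<subseteq> K \<and> \<one> \<notin> K"
      and lin: "\<And>K L. K \<in> C \<Longrightarrow> L \<in> C \<Longrightarrow> K \<subseteq> L \<or> L \<subseteq> K"
      by (auto simp: subset_chain_def A_def)
    have "left_ideal (\<Union>C) R"
    proof (rule left_idealI)
      show "\<Union>C \<subseteq> carrier R" using CA left_idealD(1) by blast
      show "\<zero> \<in> \<Union>C" using C(1) CA left_idealD(2) by blast
      show "\<ominus> a \<in> \<Union>C" if "a \<in> \<Union>C" for a using that CA left_idealD(3) by blast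
      show "r \<otimes> a \<in> \<Union>C" if "r \<in> carrier R" "a \<in> \<Union>C" for r a
        using that CA left_idealD(5) by blast
      show "a \<oplus> b \<in> \<Union>C" if ab: "a \<in> \<Union>C" "b \<in> \<Union>C" for a b
      proof -
        obtain K L where "K \<in> C" "L \<in> C" "a \<in> K" "b \<in> L" using ab by blast
        with lin[of K L] CA left_idealD(4) show ?thesis by blast
      qed
    qed
    then show "\<Union>C \<in> A" using C(1) CA by (auto simp: A_def)
  qed
  then obtain M where M: "M \<in> A" and mx: "\<And>K. K \<in> A \<Longrightarrow> M \<subseteq> K \<Longrightarrow> K = M" by blast
  have "maximal_left_ideal M R"
    unfolding maximal_left_ideal_def
  proof (intro conjI allI impI)
    show "left_ideal M R" "M \<noteq> carrier R" using M by (auto simp: A_def)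
    fix K assume K: "left_ideal K R \<and> M \<subseteq> K \<and> K \<noteq> carrier R"
    then have "\<one> \<notin> K" using left_ideal_one_imp_carrier by blast
    then show "K = M" using K M mx by (auto simp: A_def)
  qed
  then show ?thesis using M by (auto simp: A_def)
qed

lemma jacobson_imp_left_invertible:
  assumes j: "j \<in> jacobson R" and r: "r \<in> carrier R"
  shows "\<exists>v\<in>carrier R. v \<otimes> (\<one> \<ominus> r \<otimes> j) = \<one>"
proof (rule ccontr)
  assume no_inv: "\<not> ?thesis"
  have jc: "j \<in> carrier R" using j by (simp add: jacobson_def)
  define x where "x = \<one> \<ominus> r \<otimes> j"
  have xc: "x \<in> carrier R" using jc r by (simp add: x_def)
  let ?L = "{i \<oplus> t \<otimes> x | i t. i \<in> {\<zero>} \<and> t \<in> carrier R}"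
  have "left_ideal ?L R" by (rule left_ideal_add_principal[OF left_ideal_zero xc])
  moreover have "\<one> \<notin> ?L" using no_inv xc by (auto simp: x_def)
  ultimately obtain M where M: "maximal_left_ideal M R" "?L \<subseteq> M"
    using exists_maximal_left_ideal by blast
  then have LM: "left_ideal M R" by (simp add: maximal_left_ideal_def)
  have "x \<in> M" using M(2) xc by (force intro!: exI[of _ \<one>])
  moreover have "r \<otimes> j \<in> M" using j M(1) LM r by (auto simp: jacobson_def dest: left_idealD(5))
  ultimately have "x \<oplus> r \<otimes> j \<in> M" using LM by (rule left_idealD(4)[rotated])
  moreover have "x \<oplus> r \<otimes> j = \<one>" using jc r unfolding x_def by (algebra; simp)
  ultimately have "M = carrier R" using LM left_ideal_one_imp_carrier by simp
  then show False using M(1) by (simp add: maximal_left_ideal_def)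
qed

lemma left_invertible_imp_jacobson:
  assumes jc: "j \<in> carrier R"
    and inv: "\<And>r. r \<in> carrier R \<Longrightarrow> \<exists>v\<in>carrier R. v \<otimes> (\<one> \<ominus> r \<otimes> j) = \<one>"
  shows "j \<in> jacobson R"
  unfolding jacobson_def
proof (intro IntI InterI CollectI jc, simp, rule ccontr)
  fix M assume M: "maximal_left_ideal M R" and jM: "j \<notin> M"
  then have LM: "left_ideal M R" and MR: "M \<noteq> carrier R"
    and mx: "\<And>K. left_ideal K R \<Longrightarrow> M \<subseteq> K \<Longrightarrow> K \<noteq> carrier R \<Longrightarrow> K = M"
    by (auto simp: maximal_left_ideal_def)
  let ?L = "{i \<oplus> t \<otimes> j | i t. i \<in> M \<and> t \<in> carrier R}"
  have L: "left_ideal ?L R" by (rule left_ideal_add_principal[OF LM jc])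
  have "M \<subseteq> ?L"
  proof
    fix m assume "m \<in> M"
    moreover from this have "m = m \<oplus> \<zero> \<otimes> j" using left_idealD(1)[OF LM] jc by auto
    ultimately show "m \<in> ?L" by blast
  qed
  moreover have "j \<in> ?L"
  proof -
    have "j = \<zero> \<oplus> \<one> \<otimes> j" using jc by simp
    then show ?thesis using left_idealD(2)[OF LM] by blast
  qed
  ultimately have "?L = carrier R" using mx[OF L] jM by auto
  then have "\<one> \<in> ?L" by simp
  then obtain m t where m: "m \<in> M" and t: "t \<in> carrier R" and "\<one> = m \<oplus> t \<otimes> j"
    by blast
  moreover have mc: "m \<in> carrier R" using m left_idealD(1)[OF LM] by blast
  ultimately have "m = \<one> \<ominus> t \<otimes> j" using jc by (simp add: add.inv_solve_right minus_eq)
  then obtain v where "v \<in> carrier R" "v \<otimes> m = \<one>" using inv t by blast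
  then have "\<one> \<in> M" using left_idealD(5)[OF LM _ m] by metis
  then show False using MR left_ideal_one_imp_carrier[OF LM] by blast
qed

theorem jacobson_iff_left_invertible:
  "j \<in> jacobson R \<longleftrightarrow> j \<in> carrier R \<and> (\<forall>r\<in>carrier R. \<exists>v\<in>carrier R. v \<otimes> (\<one> \<ominus> r \<otimes> j) = \<one>)"
  using jacobson_imp_left_invertible left_invertible_imp_jacobson by (auto simp: jacobson_def)

lemma jacobson_closed: "j \<in> jacobson R \<Longrightarrow> j \<in> carrier R"
  by (simp add: jacobson_def)

lemma jacobson_mult_left:
  assumes j: "j \<in> jacobson R" and r: "r \<in> carrier R"
  shows "r \<otimes> j \<in> jacobson R"
  using assms jacobson_closed[OF j] m_closed m_assoc
  unfolding jacobson_iff_left_invertible by metis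

lemma jacobson_idem_eq_zero:
  assumes p: "p \<in> jacobson R" and pp: "p \<otimes> p = p"
  shows "p = \<zero>"
proof -
  have pc: "p \<in> carrier R" using jacobson_closed[OF p] .
  obtain v where v: "v \<in> carrier R" "v \<otimes> (\<one> \<ominus> p) = \<one>"
    using p unfolding jacobson_iff_left_invertible by (metis one_closed l_one)
  have "p = v \<otimes> (\<one> \<ominus> p) \<otimes> p" using v pc by simp
  also have "\<dots> = v \<otimes> (p \<ominus> p \<otimes> p)" using v(1) pc by (algebra; simp)
  also have "\<dots> = \<zero>" using v pc pp by (simp add: r_neg minus_eq)
  finally show ?thesis .
qed

end

lemma (in ring_hom_ring) jacobson_image:
  assumes surj: "h ` carrier R = carrier S" and j: "j \<in> jacobson R"
  shows "h j \<in> jacobson S"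
  unfolding S.jacobson_iff_left_invertible
proof (intro conjI ballI)
  have jc: "j \<in> carrier R" using R.jacobson_closed[OF j] .
  then show "h j \<in> carrier S" by simp
  fix b assume "b \<in> carrier S"
  then obtain r where r: "r \<in> carrier R" and b: "b = h r" using surj by blast
  then obtain v where v: "v \<in> carrier R" "v \<otimes>\<^bsub>R\<^esub> (\<one>\<^bsub>R\<^esub> \<ominus>\<^bsub>R\<^esub> r \<otimes>\<^bsub>R\<^esub> j) = \<one>\<^bsub>R\<^esub>"
    using j unfolding R.jacobson_iff_left_invertible by blast
  have "h v \<otimes>\<^bsub>S\<^esub> (\<one>\<^bsub>S\<^esub> \<ominus>\<^bsub>S\<^esub> h r \<otimes>\<^bsub>S\<^esub> h j) = h (v \<otimes>\<^bsub>R\<^esub> (\<one>\<^bsub>R\<^esub> \<ominus>\<^bsub>R\<^esub> r \<otimes>\<^bsub>R\<^esub> j))"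
    using r v(1) jc by (simp add: R.minus_eq S.minus_eq)
  also have "\<dots> = \<one>\<^bsub>S\<^esub>" by (simp only: v(2) hom_one)
  finally show "\<exists>w\<in>carrier S. w \<otimes>\<^bsub>S\<^esub> (\<one>\<^bsub>S\<^esub> \<ominus>\<^bsub>S\<^esub> b \<otimes>\<^bsub>S\<^esub> h j) = \<one>\<^bsub>S\<^esub>"
    using v(1) b by auto
qed

section \<open>Strongly J-\<open>*\<close>-clean rings\<close>

context ring
begin

lemma star_ringD:
  assumes "star_ring R s"
  shows "\<And>a. a \<in> carrier R \<Longrightarrow> s a \<in> carrier R"
    and "\<And>a b. a \<in> carrier R \<Longrightarrow> b \<in> carrier R \<Longrightarrow> s (a \<oplus> b) = s a \<oplus> s b"
    and "\<And>a b. a \<in> carrier R \<Longrightarrow> b \<in> carrier R \<Longrightarrow> s (a \<otimes> b) = s b \<otimes> s a"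
    and "\<And>a. a \<in> carrier R \<Longrightarrow> s (s a) = a"
  using assms unfolding star_ring_def by auto

lemma star_zero:
  assumes "star_ring R s" shows "s \<zero> = \<zero>"
  using star_ringD[OF assms] by (metis l_zero r_zero zero_closed)

lemma star_one:
  assumes "star_ring R s" shows "s \<one> = \<one>"
  using star_ringD[OF assms] by (metis l_one one_closed)

lemma star_minus:
  assumes "star_ring R s" "a \<in> carrier R" "b \<in> carrier R"
  shows "s (a \<ominus> b) = s a \<ominus> s b"
proof -
  note st = star_ringD[OF assms(1)]
  have "s (\<ominus> b) \<oplus> s b = \<zero>"
    using st(2)[of "\<ominus> b" b] assms star_zero[OF assms(1)] by (simp add: l_neg)
  then have "s (\<ominus> b) = \<ominus> s b" using st(1) assms(3) by (metis minus_equality a_inv_closed)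
  then show ?thesis using assms st(2) by (simp add: minus_eq)
qed

lemma star_finsum:
  assumes st: "star_ring R s" and A: "finite A" and f: "f \<in> A \<rightarrow> carrier R"
  shows "s (\<Oplus>i\<in>A. f i) = (\<Oplus>i\<in>A. s (f i))"
  using A f
proof (induction A rule: finite_induct)
  case empty then show ?case by (simp add: star_zero[OF st])
next
  case (insert a A)
  then have "s (f a) \<in> carrier R" "(\<lambda>i. s (f i)) \<in> A \<rightarrow> carrier R"
    using star_ringD(1)[OF st] by auto
  with insert show ?case by (simp add: star_ringD(2)[OF st])
qed

lemma star_image_a_r_coset:
  assumes st: "star_ring R s" and I: "I \<subseteq> carrier R" "s ` I \<subseteq> I" and a: "a \<in> carrier R"
  shows "s ` (I +> a) = I +> s a"
proof
  note S = star_ringD[OF st]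
  show "s ` (I +> a) \<subseteq> I +> s a"
  proof
    fix y assume "y \<in> s ` (I +> a)"
    then obtain i where i: "i \<in> I" "y = s (i \<oplus> a)" by (auto simp: a_r_coset_def')
    then have "y = s i \<oplus> s a" "s i \<in> I" using I a S(2) by auto
    then show "y \<in> I +> s a" by (auto simp: a_r_coset_def')
  qed
  show "I +> s a \<subseteq> s ` (I +> a)"
  proof
    fix y assume "y \<in> I +> s a"
    then obtain i where i: "i \<in> I" "y = i \<oplus> s a" by (auto simp: a_r_coset_def')
    then have "y = s (s i \<oplus> a)" using I a S by (simp add: subset_iff)
    moreover have "s i \<oplus> a \<in> I +> a" using i I by (auto simp: a_r_coset_def')
    ultimately show "y \<in> s ` (I +> a)" by blast
  qed
qed

lemma idem_complement:
  assumes "e \<in> carrier R" "e \<otimes> e = e"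
  shows "(\<one> \<ominus> e) \<otimes> (\<one> \<ominus> e) = \<one> \<ominus> e" "e \<otimes> (\<one> \<ominus> e) = \<zero>" "(\<one> \<ominus> e) \<otimes> e = \<zero>"
proof -
  have "(\<one> \<ominus> e) \<otimes> (\<one> \<ominus> e) = \<one> \<ominus> e \<ominus> e \<oplus> e \<otimes> e"
    "e \<otimes> (\<one> \<ominus> e) = e \<ominus> e \<otimes> e" "(\<one> \<ominus> e) \<otimes> e = e \<ominus> e \<otimes> e"
    using assms(1) by (algebra; simp)+
  then show "(\<one> \<ominus> e) \<otimes> (\<one> \<ominus> e) = \<one> \<ominus> e" "e \<otimes> (\<one> \<ominus> e) = \<zero>" "(\<one> \<ominus> e) \<otimes> e = \<zero>"
    using assms by (simp_all add: r_neg l_neg minus_eq a_assoc)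
qed

lemma idem_mult_commuting:
  assumes "a \<in> carrier R" "c \<in> carrier R" "a \<otimes> a = a" "c \<otimes> c = c" "a \<otimes> c = c \<otimes> a"
  shows "(a \<otimes> c) \<otimes> (a \<otimes> c) = a \<otimes> c"
proof -
  have "(a \<otimes> c) \<otimes> (a \<otimes> c) = a \<otimes> (c \<otimes> a) \<otimes> c" using assms(1,2) by (simp add: m_assoc)
  also have "\<dots> = a \<otimes> (a \<otimes> c) \<otimes> c" using assms(5) by simp
  also have "\<dots> = (a \<otimes> a) \<otimes> (c \<otimes> c)" using assms(1,2) by (simp add: m_assoc)
  finally show ?thesis using assms(3,4) by simp
qed

lemma idem_eq_mult_if_jacobson:
  assumes a: "a \<in> carrier R" "a \<otimes> a = a" and f: "f \<in> carrier R" "f \<otimes> f = f"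
    and af: "a \<otimes> f = f \<otimes> a" and J: "a \<otimes> (a \<ominus> f) \<in> jacobson R"
  shows "a = a \<otimes> f"
proof -
  have "a \<otimes> (\<one> \<ominus> f) = (\<one> \<ominus> f) \<otimes> a"
    using a f af by (simp add: r_minus l_minus minus_eq r_distr l_distr)
  then have "a \<otimes> (\<one> \<ominus> f) \<otimes> (a \<otimes> (\<one> \<ominus> f)) = a \<otimes> (\<one> \<ominus> f)"
    using idem_mult_commuting a f idem_complement(1) by simp
  moreover have "a \<otimes> (\<one> \<ominus> f) = a \<otimes> (a \<ominus> f)"
    using a f by (simp add: r_minus minus_eq r_distr)
  ultimately have "a \<otimes> (\<one> \<ominus> f) = \<zero>" using jacobson_idem_eq_zero J by simp
  moreover have "a \<otimes> (\<one> \<ominus> f) = a \<ominus> a \<otimes> f" using a f by (algebra; simp)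
  ultimately show ?thesis using a f by simp
qed

lemma jacobson_commuting_idems_eq:
  assumes a: "a \<in> carrier R" "a \<otimes> a = a" and f: "f \<in> carrier R" "f \<otimes> f = f"
    and af: "a \<otimes> f = f \<otimes> a" and J: "a \<ominus> f \<in> jacobson R"
  shows "a = f"
proof -
  have "f \<ominus> a = (\<ominus> \<one>) \<otimes> (a \<ominus> f)" using a f by (algebra; simp)
  then have "f \<ominus> a \<in> jacobson R" using jacobson_mult_left[OF J] by simp
  then have "a = a \<otimes> f" and "f = f \<otimes> a"
    using idem_eq_mult_if_jacobson a f af jacobson_mult_left J by metis+
  then show ?thesis using af by simp
qed

lemma strongly_J_star_clean_idem_fixed:
  assumes cl: "strongly_J_star_clean R s" and a: "a \<in> carrier R" "a \<otimes> a = a"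
  shows "s a = a"
proof -
  obtain f u where f: "projection R s f" and u: "u \<in> jacobson R" and "a = f \<oplus> u"
    and af: "a \<otimes> f = f \<otimes> a"
    using cl a(1) unfolding strongly_J_star_clean_def by blast
  moreover have "f \<in> carrier R" "f \<otimes> f = f" "s f = f" using f by (auto simp: projection_def)
  moreover from calculation have "a \<ominus> f = u" using jacobson_closed[OF u] by (algebra; simp)
  ultimately show ?thesis using jacobson_commuting_idems_eq a by metis
qed

text \<open>If every idempotent is self-adjoint, then \<open>e \<oplus> e \<otimes> t \<otimes> (\<one> \<ominus> e)\<close> is a projection;
  comparing it with its adjoint forces \<open>e \<otimes> t \<otimes> (\<one> \<ominus> e) = \<zero>\<close>.\<close>
lemma projection_central_if_idems_fixed:
  assumes st: "star_ring R s" and fixed: "\<And>a. a \<in> carrier R \<Longrightarrow> a \<otimes> a = a \<Longrightarrow> s a = a"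
    and e: "projection R s e" and r: "r \<in> carrier R"
  shows "e \<otimes> r = r \<otimes> e"
proof -
  note S = star_ringD[OF st]
  have ec: "e \<in> carrier R" and ee: "e \<otimes> e = e" and se: "s e = e" using e by (auto simp: projection_def)
  note compl = idem_complement[OF ec ee]
  have absorb: "e \<otimes> t = e \<otimes> t \<otimes> e" if t: "t \<in> carrier R" for t
  proof -
    define x where "x = e \<otimes> t \<otimes> (\<one> \<ominus> e)"
    have xc: "x \<in> carrier R" using t ec by (simp add: x_def)
    have ex: "e \<otimes> x = x" using t ec ee by (simp add: x_def m_assoc[symmetric])
    have xe: "x \<otimes> e = \<zero>" using t ec compl(3) by (simp add: x_def m_assoc)
    have "x \<otimes> x = (x \<otimes> e) \<otimes> x" using ex xc ec by (simp add: m_assoc)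
    then have xx: "x \<otimes> x = \<zero>" using xe xc by simp
    have "(e \<oplus> x) \<otimes> (e \<oplus> x) = e \<otimes> e \<oplus> e \<otimes> x \<oplus> (x \<otimes> e \<oplus> x \<otimes> x)"
      using ec xc by (simp add: l_distr r_distr a_ac)
    then have "(e \<oplus> x) \<otimes> (e \<oplus> x) = e \<oplus> x" using ee ex xe xx xc ec by simp
    then have "e \<oplus> s x = e \<oplus> x" using fixed[of "e \<oplus> x"] S ec xc se by simp
    then have "x = s x" using S(1)[OF xc] xc ec by (metis add.l_cancel)
    also have "s x = (\<one> \<ominus> e) \<otimes> (s t \<otimes> e)"
      using S t ec se star_minus[OF st] star_one[OF st] by (simp add: x_def)
    finally have "e \<otimes> x = \<zero>" using compl(2) S(1)[OF t] ec by (simp add: m_assoc[symmetric])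
    then have "e \<otimes> t \<otimes> (\<one> \<ominus> e) = \<zero>" using ex by (simp add: x_def)
    moreover have "e \<otimes> t \<otimes> (\<one> \<ominus> e) = e \<otimes> t \<ominus> e \<otimes> t \<otimes> e" using t ec by (algebra; simp)
    ultimately show ?thesis using t ec by simp
  qed
  have "r \<otimes> e = s (e \<otimes> s r)" using S r ec se by simp
  also have "\<dots> = s (e \<otimes> s r \<otimes> e)" using absorb S(1)[OF r] by simp
  also have "\<dots> = e \<otimes> r \<otimes> e" using S r ec se by (simp add: m_assoc)
  also have "\<dots> = e \<otimes> r" using absorb[OF r] by simp
  finally show ?thesis by simp
qed

corollary strongly_J_star_clean_projection_central:
  assumes "star_ring R s" "strongly_J_star_clean R s" "projection R s e" "r \<in> carrier R"
  shows "e \<otimes> r = r \<otimes> e"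
  using projection_central_if_idems_fixed strongly_J_star_clean_idem_fixed assms by blast

end

lemma (in ring_hom_ring) strongly_J_star_clean_image:
  assumes surj: "h ` carrier R = carrier S"
    and star_hom: "\<And>a. a \<in> carrier R \<Longrightarrow> h (s a) = t (h a)"
    and cl: "strongly_J_star_clean R s"
  shows "strongly_J_star_clean S t"
  unfolding strongly_J_star_clean_def
proof
  fix b assume "b \<in> carrier S"
  then obtain a where a: "a \<in> carrier R" "b = h a" using surj by blast
  then obtain e u where e: "projection R s e" and u: "u \<in> jacobson R"
    and aeu: "a = e \<oplus>\<^bsub>R\<^esub> u" and ae: "a \<otimes>\<^bsub>R\<^esub> e = e \<otimes>\<^bsub>R\<^esub> a"
    using cl unfolding strongly_J_star_clean_def by blast
  have ec: "e \<in> carrier R" and "e \<otimes>\<^bsub>R\<^esub> e = e" "s e = e" using e by (auto simp: projection_def)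
  then have "projection S t (h e)" using star_hom[OF ec] by (auto simp: projection_def simp flip: hom_mult)
  moreover have "b = h e \<oplus>\<^bsub>S\<^esub> h u" using a aeu ec R.jacobson_closed[OF u] by simp
  moreover have "b \<otimes>\<^bsub>S\<^esub> h e = h e \<otimes>\<^bsub>S\<^esub> b" using a ae ec by (simp flip: hom_mult)
  ultimately show "\<exists>e u. projection S t e \<and> u \<in> jacobson S \<and> b = e \<oplus>\<^bsub>S\<^esub> u \<and> b \<otimes>\<^bsub>S\<^esub> e = e \<otimes>\<^bsub>S\<^esub> b"
    using jacobson_image[OF surj u] by blast
qed

section \<open>The power series ring\<close>

definition PS_const :: "('a, 'm) ring_scheme \<Rightarrow> 'a \<Rightarrow> nat \<Rightarrow> 'a" where
  "PS_const R a = (\<lambda>n. if n = 0 then a else \<zero>\<^bsub>R\<^esub>)"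

context ring
begin

lemma PS_simps:
  "carrier (PS R) = PS_carrier R"
  "f \<otimes>\<^bsub>PS R\<^esub> g = (\<lambda>n. \<Oplus>i\<in>{..n}. f i \<otimes> g (n - i))"
  "\<one>\<^bsub>PS R\<^esub> = PS_const R \<one>"
  "\<zero>\<^bsub>PS R\<^esub> = (\<lambda>n. \<zero>)"
  "f \<oplus>\<^bsub>PS R\<^esub> g = (\<lambda>n. f n \<oplus> g n)"
  by (simp_all add: PS_def PS_const_def)

lemma PS_carrier_iff: "f \<in> carrier (PS R) \<longleftrightarrow> (\<forall>i. f i \<in> carrier R)"
  by (simp add: PS_simps PS_carrier_def)

lemma PS_const_closed: "a \<in> carrier R \<Longrightarrow> PS_const R a \<in> carrier (PS R)"
  by (simp add: PS_carrier_iff PS_const_def)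

lemma finsum_if_eq:
  assumes "i \<in> A" "finite A" "c \<in> carrier R"
  shows "(\<Oplus>j\<in>A. if j = i then c else \<zero>) = c"
  using add.finprod_singleton_swap[of i A "\<lambda>_. c"] assms by (simp add: Pi_def)

lemma finsum_reflect_atMost:
  fixes n :: nat
  assumes "f \<in> {..n} \<rightarrow> carrier R"
  shows "(\<Oplus>i\<in>{..n}. f (n - i)) = (\<Oplus>i\<in>{..n}. f i)"
proof -
  have "(\<lambda>i. n - i) ` {..n} = {..n}"
  proof
    show "{..n} \<subseteq> (\<lambda>i. n - i) ` {..n}"
    proof
      fix j assume "j \<in> {..n}"
      then have "j = n - (n - j)" "n - j \<in> {..n}" by auto
      then show "j \<in> (\<lambda>i. n - i) ` {..n}" by blast
    qed
  qed auto
  moreover have "inj_on (\<lambda>i. n - i) {..n}" by (auto simp: inj_on_def)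
  ultimately show ?thesis using finsum_reindex[of f "\<lambda>i. n - i" "{..n}"] assms by simp
qed

lemma PS_const_mult_coeff:
  assumes f: "f \<in> carrier (PS R)" and a: "a \<in> carrier R"
  shows "(PS_const R a \<otimes>\<^bsub>PS R\<^esub> f) n = a \<otimes> f n"
proof -
  have fc: "\<And>i. f i \<in> carrier R" using f by (simp add: PS_carrier_iff)
  have "(PS_const R a \<otimes>\<^bsub>PS R\<^esub> f) n = (\<Oplus>i\<in>{..n}. if i = 0 then a \<otimes> f n else \<zero>)"
    unfolding PS_simps PS_const_def by (rule finsum_cong') (auto simp: fc a)
  also have "\<dots> = a \<otimes> f n" by (rule finsum_if_eq) (auto simp: fc a)
  finally show ?thesis .
qed

lemma PS_mult_const_coeff:
  assumes f: "f \<in> carrier (PS R)" and a: "a \<in> carrier R"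
  shows "(f \<otimes>\<^bsub>PS R\<^esub> PS_const R a) n = f n \<otimes> a"
proof -
  have fc: "\<And>i. f i \<in> carrier R" using f by (simp add: PS_carrier_iff)
  have "(f \<otimes>\<^bsub>PS R\<^esub> PS_const R a) n = (\<Oplus>i\<in>{..n}. if i = n then f n \<otimes> a else \<zero>)"
    unfolding PS_simps PS_const_def by (rule finsum_cong') (auto simp: fc a)
  also have "\<dots> = f n \<otimes> a" by (rule finsum_if_eq) (auto simp: fc a)
  finally show ?thesis .
qed

lemma PS_mult_closed:
  "f \<in> carrier (PS R) \<Longrightarrow> g \<in> carrier (PS R) \<Longrightarrow> f \<otimes>\<^bsub>PS R\<^esub> g \<in> carrier (PS R)"
  by (auto simp: PS_simps(2) PS_carrier_iff intro!: finsum_closed)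

text \<open>The argument of \<open>UP_m_assoc\<close>, without the bounded-support condition.\<close>
lemma PS_mult_assoc:
  assumes "f \<in> carrier (PS R)" "g \<in> carrier (PS R)" "h \<in> carrier (PS R)"
  shows "f \<otimes>\<^bsub>PS R\<^esub> g \<otimes>\<^bsub>PS R\<^esub> h = f \<otimes>\<^bsub>PS R\<^esub> (g \<otimes>\<^bsub>PS R\<^esub> h)"
proof -
  have R: "f \<in> UNIV \<rightarrow> carrier R" "g \<in> UNIV \<rightarrow> carrier R" "h \<in> UNIV \<rightarrow> carrier R"
    using assms by (auto simp: PS_carrier_iff)
  have partial: "(\<Oplus>j\<in>{..k}. (\<Oplus>i\<in>{..j}. f i \<otimes> g (j - i)) \<otimes> h (n - j)) =
      (\<Oplus>j\<in>{..k}. f j \<otimes> (\<Oplus>i\<in>{..k - j}. g i \<otimes> h (n - j - i)))" if "k \<le> n" for n k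
    using that
  proof (induction k)
    case 0 then show ?case using R by (simp add: Pi_def m_assoc)
  next
    case (Suc k)
    then have "k \<le> n" by arith
    with Suc.IH R show ?case
      by (simp cong: finsum_cong add: Suc_diff_le Pi_def l_distr r_distr m_assoc)
         (simp cong: finsum_cong add: Pi_def a_ac finsum_ldistr m_assoc)
  qed
  show ?thesis using partial[OF order_refl] R by (intro ext) (auto simp: PS_simps(2) Pi_def)
qed

lemma PS_ring: "ring (PS R)"
proof (rule ringI)
  show "abelian_group (PS R)"
  proof (rule abelian_groupI)
    fix f assume f: "f \<in> carrier (PS R)"
    show "\<exists>g\<in>carrier (PS R). g \<oplus>\<^bsub>PS R\<^esub> f = \<zero>\<^bsub>PS R\<^esub>"
      by (rule bexI[of _ "\<lambda>n. \<ominus> f n"]) (use f in \<open>auto simp: PS_simps(4,5) PS_carrier_iff l_neg\<close>)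
  qed (auto simp: PS_simps(4,5) PS_carrier_iff a_assoc intro: a_comm)
next
  show "monoid (PS R)"
  proof (rule monoidI)
    fix f assume f: "f \<in> carrier (PS R)"
    show "\<one>\<^bsub>PS R\<^esub> \<otimes>\<^bsub>PS R\<^esub> f = f" "f \<otimes>\<^bsub>PS R\<^esub> \<one>\<^bsub>PS R\<^esub> = f"
      using PS_const_mult_coeff[OF f] PS_mult_const_coeff[OF f] f by (auto simp: PS_simps(3) PS_carrier_iff)
  qed (auto simp: PS_mult_closed PS_mult_assoc PS_simps(3) PS_const_closed)
qed (auto simp: PS_simps(2,5) PS_carrier_iff l_distr r_distr Pi_def)

lemma PS_a_inv:
  assumes "f \<in> carrier (PS R)"
  shows "\<ominus>\<^bsub>PS R\<^esub> f = (\<lambda>n. \<ominus> f n)"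
proof -
  interpret P: ring "PS R" by (rule PS_ring)
  show ?thesis
    by (rule P.minus_equality) (use assms in \<open>auto simp: PS_carrier_iff PS_simps(4,5) l_neg\<close>)
qed

end

text \<open>Stage \<open>n\<close> holds the coefficients \<open>0..n\<close> of the left inverse of a series \<open>k\<close> with
  constant term \<open>\<one>\<close>; later stages leave them unchanged.\<close>
primrec PS_inv_stage :: "('a, 'm) ring_scheme \<Rightarrow> (nat \<Rightarrow> 'a) \<Rightarrow> nat \<Rightarrow> nat \<Rightarrow> 'a" where
  "PS_inv_stage R k 0 = (\<lambda>i. \<one>\<^bsub>R\<^esub>)"
| "PS_inv_stage R k (Suc n) = (PS_inv_stage R k n)
     (Suc n := \<ominus>\<^bsub>R\<^esub> (\<Oplus>\<^bsub>R\<^esub> i\<in>{..n}. PS_inv_stage R k n i \<otimes>\<^bsub>R\<^esub> k (Suc n - i)))"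

context ring
begin

lemma PS_inv_stage_closed: "k \<in> carrier (PS R) \<Longrightarrow> PS_inv_stage R k n i \<in> carrier R"
  by (induction n arbitrary: i) (auto simp: PS_carrier_iff intro!: finsum_closed)

lemma PS_inv_stage_stable: "i \<le> n \<Longrightarrow> n \<le> m \<Longrightarrow> PS_inv_stage R k m i = PS_inv_stage R k n i"
  by (induction m) (auto simp: le_Suc_eq)

lemma PS_left_inverse:
  assumes k: "k \<in> carrier (PS R)" and k0: "k 0 = \<one>"
  shows "\<exists>h\<in>carrier (PS R). h \<otimes>\<^bsub>PS R\<^esub> k = \<one>\<^bsub>PS R\<^esub>"
proof
  define h where "h = (\<lambda>i. PS_inv_stage R k i i)"
  have kc: "\<And>i. k i \<in> carrier R" using k by (simp add: PS_carrier_iff)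
  have hc: "\<And>i. h i \<in> carrier R" using PS_inv_stage_closed[OF k] by (simp add: h_def)
  have stage_h: "PS_inv_stage R k n i = h i" if "i \<le> n" for i n
    using PS_inv_stage_stable[OF order_refl that] by (simp add: h_def)
  have hS: "h (Suc n) = \<ominus> (\<Oplus>i\<in>{..n}. h i \<otimes> k (Suc n - i))" for n
  proof -
    have "h (Suc n) = \<ominus> (\<Oplus>i\<in>{..n}. PS_inv_stage R k n i \<otimes> k (Suc n - i))" by (simp add: h_def)
    also have "(\<Oplus>i\<in>{..n}. PS_inv_stage R k n i \<otimes> k (Suc n - i)) = (\<Oplus>i\<in>{..n}. h i \<otimes> k (Suc n - i))"
      by (rule finsum_cong') (auto simp: stage_h hc kc)
    finally show ?thesis .
  qed
  show "h \<in> carrier (PS R)" using hc by (simp add: PS_carrier_iff)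
  show "h \<otimes>\<^bsub>PS R\<^esub> k = \<one>\<^bsub>PS R\<^esub>"
  proof
    fix n show "(h \<otimes>\<^bsub>PS R\<^esub> k) n = \<one>\<^bsub>PS R\<^esub> n"
    proof (cases n)
      case 0 then show ?thesis using k0 by (simp add: PS_simps(2,3) PS_const_def h_def)
    next
      case (Suc m)
      have "(h \<otimes>\<^bsub>PS R\<^esub> k) n = h (Suc m) \<otimes> k 0 \<oplus> (\<Oplus>i\<in>{..m}. h i \<otimes> k (Suc m - i))"
        using Suc hc kc by (simp add: PS_simps(2))
      also have "\<dots> = \<zero>" using hS[of m] k0 hc kc by (simp add: l_neg)
      finally show ?thesis using Suc by (simp add: PS_simps(3) PS_const_def)
    qed
  qed
qed

lemma ring_hom_ring_PS_coeff0: "ring_hom_ring (PS R) R (\<lambda>f. f 0)"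
  by (rule ring_hom_ringI[OF PS_ring ring_axioms]) (auto simp: PS_carrier_iff PS_simps(2,3,5) PS_const_def)

lemma PS_coeff0_surj: "(\<lambda>f. f 0) ` carrier (PS R) = carrier R"
proof
  show "carrier R \<subseteq> (\<lambda>f. f 0) ` carrier (PS R)"
  proof
    fix a assume a: "a \<in> carrier R"
    then have "a = PS_const R a 0" by (simp add: PS_const_def)
    then show "a \<in> (\<lambda>f. f 0) ` carrier (PS R)" using PS_const_closed[OF a] by blast
  qed
qed (auto simp: PS_carrier_iff)

text \<open>The constant term of \<open>\<one> \<ominus> g \<otimes> f\<close> is left invertible, hence so is the series.\<close>
theorem jacobson_PS_iff: "f \<in> jacobson (PS R) \<longleftrightarrow> f \<in> carrier (PS R) \<and> f 0 \<in> jacobson R"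
proof -
  interpret P: ring "PS R" by (rule PS_ring)
  interpret C0: ring_hom_ring "PS R" R "\<lambda>f. f 0" by (rule ring_hom_ring_PS_coeff0)
  have "f \<in> jacobson (PS R)" if f: "f \<in> carrier (PS R)" and f0: "f 0 \<in> jacobson R"
    unfolding P.jacobson_iff_left_invertible
  proof (intro conjI ballI f)
    fix g assume g: "g \<in> carrier (PS R)"
    let ?w = "\<one>\<^bsub>PS R\<^esub> \<ominus>\<^bsub>PS R\<^esub> g \<otimes>\<^bsub>PS R\<^esub> f"
    have wc: "?w \<in> carrier (PS R)" using f g by simp
    obtain v where v: "v \<in> carrier R" "v \<otimes> (\<one> \<ominus> g 0 \<otimes> f 0) = \<one>"
      using f0 g unfolding jacobson_iff_left_invertible by (auto simp: PS_carrier_iff)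
    let ?k = "PS_const R v \<otimes>\<^bsub>PS R\<^esub> ?w"
    have kc: "?k \<in> carrier (PS R)" using PS_const_closed[OF v(1)] wc by simp
    have "?k 0 = v \<otimes> (\<one> \<ominus> g 0 \<otimes> f 0)"
      using PS_const_closed[OF v(1)] f g by (simp add: minus_eq P.minus_eq PS_const_def)
    then obtain h where h: "h \<in> carrier (PS R)" "h \<otimes>\<^bsub>PS R\<^esub> ?k = \<one>\<^bsub>PS R\<^esub>"
      using PS_left_inverse[OF kc] v(2) by auto
    then have "(h \<otimes>\<^bsub>PS R\<^esub> PS_const R v) \<otimes>\<^bsub>PS R\<^esub> ?w = \<one>\<^bsub>PS R\<^esub>"
      using PS_const_closed[OF v(1)] wc by (simp add: P.m_assoc)
    then show "\<exists>u\<in>carrier (PS R). u \<otimes>\<^bsub>PS R\<^esub> ?w = \<one>\<^bsub>PS R\<^esub>"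
      using h(1) PS_const_closed[OF v(1)] by blast
  qed
  then show ?thesis
    using C0.jacobson_image[OF PS_coeff0_surj] P.jacobson_closed by blast
qed

lemma PS_const_mult_const:
  "a \<in> carrier R \<Longrightarrow> b \<in> carrier R \<Longrightarrow> PS_const R a \<otimes>\<^bsub>PS R\<^esub> PS_const R b = PS_const R (a \<otimes> b)"
  by (rule ext) (simp add: PS_const_mult_coeff PS_const_closed, simp add: PS_const_def)

lemma PS_star_const: "star_ring R s \<Longrightarrow> PS_star s (PS_const R a) = PS_const R (s a)"
  by (auto simp: PS_star_def PS_const_def star_zero)

lemma star_ring_PS:
  assumes st: "star_ring R s"
  shows "star_ring (PS R) (PS_star s)"
proof -
  note S = star_ringD[OF st]
  have "PS_star s (f \<otimes>\<^bsub>PS R\<^esub> g) = PS_star s g \<otimes>\<^bsub>PS R\<^esub> PS_star s f"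
    if f: "f \<in> carrier (PS R)" and g: "g \<in> carrier (PS R)" for f g
  proof
    fix n
    have fc: "\<And>i. f i \<in> carrier R" and gc: "\<And>i. g i \<in> carrier R"
      using f g by (auto simp: PS_carrier_iff)
    have "PS_star s (f \<otimes>\<^bsub>PS R\<^esub> g) n = (\<Oplus>i\<in>{..n}. s (g (n - i)) \<otimes> s (f i))"
      using fc gc by (simp add: PS_simps(2) PS_star_def star_finsum[OF st] S(3))
    also have "\<dots> = (\<Oplus>i\<in>{..n}. s (g (n - i)) \<otimes> s (f (n - (n - i))))"
      by (rule finsum_cong') (auto simp: fc gc S(1))
    also have "\<dots> = (\<Oplus>i\<in>{..n}. s (g i) \<otimes> s (f (n - i)))"
      by (rule finsum_reflect_atMost[where f = "\<lambda>i. s (g i) \<otimes> s (f (n - i))"]) (simp add: fc gc S(1))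
    finally show "PS_star s (f \<otimes>\<^bsub>PS R\<^esub> g) n = (PS_star s g \<otimes>\<^bsub>PS R\<^esub> PS_star s f) n"
      by (simp add: PS_simps(2) PS_star_def)
  qed
  then show ?thesis
    using S PS_ring by (auto simp: star_ring_def PS_carrier_iff PS_simps(5) PS_star_def)
qed

theorem strongly_J_star_clean_PS:
  assumes st: "star_ring R s" and cl: "strongly_J_star_clean R s"
  shows "strongly_J_star_clean (PS R) (PS_star s)"
  unfolding strongly_J_star_clean_def
proof
  interpret P: ring "PS R" by (rule PS_ring)
  fix f assume f: "f \<in> carrier (PS R)"
  obtain e u where e: "projection R s e" and u: "u \<in> jacobson R" and f0: "f 0 = e \<oplus> u"
    using cl f unfolding strongly_J_star_clean_def PS_carrier_iff by blast
  have ec: "e \<in> carrier R" and ee: "e \<otimes> e = e" and se: "s e = e" using e by (auto simp: projection_def)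
  define E where "E = PS_const R e"
  have Ec: "E \<in> carrier (PS R)" using PS_const_closed[OF ec] by (simp add: E_def)
  have "projection (PS R) (PS_star s) E"
  proof -
    have "E \<otimes>\<^bsub>PS R\<^esub> E = E" using PS_const_mult_const[OF ec ec] ee by (simp add: E_def)
    then show ?thesis using Ec PS_star_const[OF st] se by (simp add: projection_def E_def)
  qed
  moreover have "f \<ominus>\<^bsub>PS R\<^esub> E \<in> jacobson (PS R)"
  proof -
    interpret C0: ring_hom_ring "PS R" R "\<lambda>f. f 0" by (rule ring_hom_ring_PS_coeff0)
    have "(f \<ominus>\<^bsub>PS R\<^esub> E) 0 = f 0 \<ominus> e" using f Ec by (simp add: P.minus_eq minus_eq E_def PS_const_def)
    also have "\<dots> = u" using f0 ec jacobson_closed[OF u] by (algebra; simp)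
    finally show ?thesis using u P.minus_closed[OF f Ec] jacobson_PS_iff by simp
  qed
  moreover have "f = E \<oplus>\<^bsub>PS R\<^esub> (f \<ominus>\<^bsub>PS R\<^esub> E)" using f Ec by (algebra; simp)
  moreover have "f \<otimes>\<^bsub>PS R\<^esub> E = E \<otimes>\<^bsub>PS R\<^esub> f"
  proof
    fix n
    have "f n \<otimes> e = e \<otimes> f n"
      using strongly_J_star_clean_projection_central[OF st cl e] f by (simp add: PS_carrier_iff)
    then show "(f \<otimes>\<^bsub>PS R\<^esub> E) n = (E \<otimes>\<^bsub>PS R\<^esub> f) n"
      using PS_mult_const_coeff[OF f ec] PS_const_mult_coeff[OF f ec] by (simp add: E_def)
  qed
  ultimately show "\<exists>E U. projection (PS R) (PS_star s) E \<and> U \<in> jacobson (PS R) \<and>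
      f = E \<oplus>\<^bsub>PS R\<^esub> U \<and> f \<otimes>\<^bsub>PS R\<^esub> E = E \<otimes>\<^bsub>PS R\<^esub> f" by blast
qed

end

section \<open>Truncated power series rings\<close>

lemma (in ideal) carrier_Quot: "carrier (R Quot I) = (\<lambda>a. I +> a) ` carrier R"
  unfolding FactRing_def A_RCOSETS_def' by auto

lemma (in ring_hom_ring) ring_hom_ring_Quot:
  assumes I: "ideal I R" and ker: "I \<subseteq> a_kernel R S h"
  shows "ring_hom_ring (R Quot I) S (\<lambda>C. the_elem (h ` C))"
    and "x \<in> carrier R \<Longrightarrow> the_elem (h ` (I +> x)) = h x"
proof -
  interpret I: ideal I R by (rule I)
  show val: "the_elem (h ` (I +> x)) = h x" if x: "x \<in> carrier R" for x
  proof -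
    have "h (i \<oplus> x) = h x" if "i \<in> I" for i
    proof -
      have "i \<in> a_kernel R S h" using ker that by blast
      then have "i \<in> carrier R" "h i = \<zero>\<^bsub>S\<^esub>" unfolding a_kernel_def' by simp_all
      then show ?thesis using x by simp
    qed
    moreover have "x \<in> I +> x" using I.a_rcos_self[OF x] .
    ultimately have "h ` (I +> x) = {h x}" unfolding a_r_coset_def' by blast
    then show ?thesis by simp
  qed
  show "ring_hom_ring (R Quot I) S (\<lambda>C. the_elem (h ` C))"
  proof (rule ring_hom_ringI[OF I.quotient_is_ring S.ring_axioms])
    fix C D assume "C \<in> carrier (R Quot I)" "D \<in> carrier (R Quot I)"
    then obtain x y where "x \<in> carrier R" "y \<in> carrier R" "C = I +> x" "D = I +> y"
      by (auto simp: I.carrier_Quot)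
    then show "the_elem (h ` (C \<otimes>\<^bsub>R Quot I\<^esub> D)) = the_elem (h ` C) \<otimes>\<^bsub>S\<^esub> the_elem (h ` D)"
      "the_elem (h ` (C \<oplus>\<^bsub>R Quot I\<^esub> D)) = the_elem (h ` C) \<oplus>\<^bsub>S\<^esub> the_elem (h ` D)"
      by (simp_all add: FactRing_def I.rcoset_mult_add I.a_rcos_sum val)
  next
    show "the_elem (h ` \<one>\<^bsub>R Quot I\<^esub>) = \<one>\<^bsub>S\<^esub>" by (simp add: FactRing_def val)
  qed (auto simp: I.carrier_Quot val)
qed

definition PS_order_ge :: "('a, 'm) ring_scheme \<Rightarrow> nat \<Rightarrow> (nat \<Rightarrow> 'a) set" where
  "PS_order_ge R n = {f \<in> carrier (PS R). \<forall>i<n. f i = \<zero>\<^bsub>R\<^esub>}"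

context ring
begin

lemma PS_monomial_mult:
  assumes g: "g \<in> carrier (PS R)"
  shows "((\<lambda>i. if i = n then \<one> else \<zero>) \<otimes>\<^bsub>PS R\<^esub> g) m = (if n \<le> m then g (m - n) else \<zero>)"
proof -
  have gc: "\<And>i. g i \<in> carrier R" using g by (simp add: PS_carrier_iff)
  have "((\<lambda>i. if i = n then \<one> else \<zero>) \<otimes>\<^bsub>PS R\<^esub> g) m = (\<Oplus>i\<in>{..m}. if i = n then g (m - n) else \<zero>)"
    unfolding PS_simps(2) by (rule finsum_cong') (auto simp: gc)
  also have "\<dots> = (if n \<le> m then g (m - n) else \<zero>)"
    using finsum_if_eq[of n "{..m}" "g (m - n)"] by (auto simp: gc intro: add.finprod_one_eqI)
  finally show ?thesis .
qed

lemma PS_X_pow: "PS_X R [^]\<^bsub>PS R\<^esub> n = (\<lambda>i. if i = n then \<one> else \<zero>)"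
proof (induction n)
  case 0 then show ?case by (simp add: PS_simps(3) PS_const_def)
next
  case (Suc n)
  have X: "PS_X R = (\<lambda>i. if i = 1 then \<one> else \<zero>)" by (simp add: PS_X_def)
  have "PS_X R \<in> carrier (PS R)" by (simp add: X PS_carrier_iff)
  then show ?case
    using Suc PS_monomial_mult[of "PS_X R" n] by (intro ext) (auto simp: X)
qed

lemma PS_order_ge_ideal: "ideal (PS_order_ge R n) (PS R)"
proof -
  interpret P: ring "PS R" by (rule PS_ring)
  have "left_ideal (PS_order_ge R n) (PS R)"
  proof (rule P.left_idealI)
    fix g f assume g: "g \<in> carrier (PS R)" and f: "f \<in> PS_order_ge R n"
    then have "(g \<otimes>\<^bsub>PS R\<^esub> f) m = \<zero>" if "m < n" for m
      unfolding PS_simps(2) using that by (intro add.finprod_one_eqI) (auto simp: PS_order_ge_def PS_carrier_iff)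
    then show "g \<otimes>\<^bsub>PS R\<^esub> f \<in> PS_order_ge R n" using g f by (simp add: PS_order_ge_def)
  qed (auto simp: PS_order_ge_def PS_a_inv PS_carrier_iff PS_simps(4,5))
  moreover have "f \<otimes>\<^bsub>PS R\<^esub> g \<in> PS_order_ge R n" if f: "f \<in> PS_order_ge R n" and g: "g \<in> carrier (PS R)" for f g
  proof -
    have "(f \<otimes>\<^bsub>PS R\<^esub> g) m = \<zero>" if "m < n" for m
      unfolding PS_simps(2) using that f g by (intro add.finprod_one_eqI) (auto simp: PS_order_ge_def PS_carrier_iff)
    then show ?thesis using g f by (simp add: PS_order_ge_def)
  qed
  ultimately show ?thesis
    by (intro idealI[OF PS_ring]) (auto simp: left_ideal_def additive_subgroup_def)
qed

lemma PS_ideal_eq_order_ge: "PS_ideal R n = PS_order_ge R n"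
proof -
  interpret P: ring "PS R" by (rule PS_ring)
  let ?xn = "PS_X R [^]\<^bsub>PS R\<^esub> n"
  have xn: "?xn \<in> carrier (PS R)" by (simp add: PS_X_pow PS_carrier_iff)
  show ?thesis
  proof
    show "PS_ideal R n \<subseteq> PS_order_ge R n"
      unfolding PS_ideal_def using P.genideal_minimal[OF PS_order_ge_ideal] xn
      by (auto simp: PS_order_ge_def PS_X_pow)
    show "PS_order_ge R n \<subseteq> PS_ideal R n"
    proof
      fix f assume f: "f \<in> PS_order_ge R n"
      define g where "g = (\<lambda>i. f (i + n))"
      have gc: "g \<in> carrier (PS R)" using f by (auto simp: PS_order_ge_def g_def PS_carrier_iff)
      have "f = ?xn \<otimes>\<^bsub>PS R\<^esub> g"
      proof
        fix m show "f m = (?xn \<otimes>\<^bsub>PS R\<^esub> g) m"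
          using f unfolding PS_X_pow PS_monomial_mult[OF gc] by (auto simp: g_def PS_order_ge_def)
      qed
      moreover have "?xn \<in> PS_ideal R n" unfolding PS_ideal_def by (rule P.genideal_self'[OF xn])
      ultimately show "f \<in> PS_ideal R n"
        using ideal.I_r_closed[OF P.genideal_ideal[of "{?xn}"]] xn gc unfolding PS_ideal_def by auto
    qed
  qed
qed

lemma ideal_PS_ideal: "ideal (PS_ideal R n) (PS R)"
  using PS_order_ge_ideal by (simp add: PS_ideal_eq_order_ge)

lemma PS_trunc_star_coset:
  assumes st: "star_ring R s" and f: "f \<in> carrier (PS R)"
  shows "PS_trunc_star s (PS_ideal R n +>\<^bsub>PS R\<^esub> f) = PS_ideal R n +>\<^bsub>PS R\<^esub> PS_star s f"
proof -
  interpret P: ring "PS R" by (rule PS_ring)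
  interpret I: ideal "PS_ideal R n" "PS R" by (rule ideal_PS_ideal)
  have "PS_star s ` PS_ideal R n \<subseteq> PS_ideal R n"
    using star_ringD(1)[OF st] star_zero[OF st]
    by (auto simp: PS_ideal_eq_order_ge PS_order_ge_def PS_star_def PS_carrier_iff)
  then show ?thesis
    using P.star_image_a_r_coset[OF star_ring_PS[OF st] I.a_subset _ f] by (simp add: PS_trunc_star_def)
qed

lemma strongly_J_star_clean_PS_trunc:
  assumes st: "star_ring R s" and cl: "strongly_J_star_clean (PS R) (PS_star s)"
  shows "strongly_J_star_clean (PS_trunc R n) (PS_trunc_star s)"
proof -
  interpret I: ideal "PS_ideal R n" "PS R" by (rule ideal_PS_ideal)
  show ?thesis unfolding PS_trunc_def
  proof (rule ring_hom_ring.strongly_J_star_clean_image[OF I.rcos_ring_hom_ring I.carrier_Quot[symmetric] _ cl])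
    show "PS_ideal R n +>\<^bsub>PS R\<^esub> PS_star s f = PS_trunc_star s (PS_ideal R n +>\<^bsub>PS R\<^esub> f)"
      if "f \<in> carrier (PS R)" for f
      using PS_trunc_star_coset[OF st that] by simp
  qed
qed

text \<open>For \<open>n > 0\<close>, taking the constant term is well defined on \<open>R[[x]]/(x^n)\<close>.\<close>
lemma strongly_J_star_clean_of_PS_trunc:
  assumes st: "star_ring R s" and n: "0 < n"
    and cl: "strongly_J_star_clean (PS_trunc R n) (PS_trunc_star s)"
  shows "strongly_J_star_clean R s"
proof -
  interpret I: ideal "PS_ideal R n" "PS R" by (rule ideal_PS_ideal)
  interpret C0: ring_hom_ring "PS R" R "\<lambda>f. f 0" by (rule ring_hom_ring_PS_coeff0)
  have "PS_ideal R n \<subseteq> a_kernel (PS R) R (\<lambda>f. f 0)"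
    using n unfolding PS_ideal_eq_order_ge PS_order_ge_def a_kernel_def' by blast
  note Q = C0.ring_hom_ring_Quot[OF I.is_ideal this]
  let ?c = "\<lambda>C. the_elem ((\<lambda>f. f 0) ` C)"
  have "?c ` carrier (PS_trunc R n) = carrier R"
    using PS_coeff0_surj Q(2) by (auto simp: PS_trunc_def I.carrier_Quot image_image)
  moreover have "?c (PS_trunc_star s C) = s (?c C)" if C: "C \<in> carrier (PS_trunc R n)" for C
  proof -
    obtain f where f: "f \<in> carrier (PS R)" and C_eq: "C = PS_ideal R n +>\<^bsub>PS R\<^esub> f"
      using C by (auto simp: PS_trunc_def I.carrier_Quot)
    have "PS_star s f \<in> carrier (PS R)"
      using f star_ringD(1)[OF st] by (simp add: PS_star_def PS_carrier_iff)
    then show ?thesis using Q(2) f unfolding C_eq PS_trunc_star_coset[OF st f] by (simp add: PS_star_def)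
  qed
  ultimately show ?thesis
    using ring_hom_ring.strongly_J_star_clean_image[OF Q(1)] cl unfolding PS_trunc_def by blast
qed

end

theorem proposition4p3:
  fixes R :: "('a, 'm) ring_scheme" and s :: "'a \<Rightarrow> 'a"
  assumes "star_ring R s"
  shows "(strongly_J_star_clean R s \<longleftrightarrow> strongly_J_star_clean (PS R) (PS_star s))
       \<and> (strongly_J_star_clean (PS R) (PS_star s) \<longleftrightarrow>
            (\<forall>n\<ge>2. strongly_J_star_clean (PS_trunc R n) (PS_trunc_star s)))
       \<and> ((\<forall>n\<ge>2. strongly_J_star_clean (PS_trunc R n) (PS_trunc_star s)) \<longleftrightarrow>
            strongly_J_star_clean (PS_trunc R 2) (PS_trunc_star s))"
proof -
  interpret ring R using assms by (simp add: star_ring_def)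
  have PS_to_R: "strongly_J_star_clean (PS R) (PS_star s) \<Longrightarrow> strongly_J_star_clean R s"
    using ring_hom_ring.strongly_J_star_clean_image[OF ring_hom_ring_PS_coeff0 PS_coeff0_surj,
        of "PS_star s" s]
    by (simp add: PS_star_def)
  have "strongly_J_star_clean (PS_trunc R 2) (PS_trunc_star s) \<Longrightarrow> strongly_J_star_clean R s"
    using strongly_J_star_clean_of_PS_trunc[OF assms, of 2] by simp
  then show ?thesis
    using strongly_J_star_clean_PS[OF assms] strongly_J_star_clean_PS_trunc[OF assms] PS_to_R by blast
qed

end
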